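(* Let $u_0\in H^1(S^1)$ and let $(\rho,\rho_t)$ be the global solution for $t\ge0$ (with $\int_0^1\rho(t,x)^2dx=1$ for all $t$) of the system $\frac{d\rho}{dt}=\rho_t$, $\frac{d\rho_t}{dt}=f(\rho,\rho_t)$, $\rho(0)=1$, $\rho_t(0)=\tfrac12u_0'$. For $t\ge0$ let $K(t,x)=\int_0^x\rho(t,y)^2dy+t\,u_0(0)-\int_0^t\int_0^\tau H(s,0)\,ds\,d\tau$ and $N(t)=\{x\in S^1: K_x(t,x)\text{ exists and equals }0\}$ (i.e. $\rho(t,x)=0$). Then for almost every $t\in\mathbb{R}_+$, $$\int_{N(t)}\rho_t(t,y)^2\,dy=0.$$
   Context: $S^1=\mathbb{R}/\mathbb{Z}$; functions on $S^1$ are $1$-periodic functions on $[0,1]$. Let $\mu=\int_0^1u_0\,dx$. For $\rho,\sigma\in L^2(S^1)$ define $$G(\rho,\sigma)(x)=\int_0^x 2\rho\sigma\,dy+\mu-\int_0^1\Big(\int_0^y 2\rho\sigma\,dz\Big)\rho(y)^2\,dy,$$ $$F(\rho,\sigma)(x)=\int_0^1\frac{\cosh\big(\big|\int_y^x\rho(z)^2dz\big|-\tfrac12\big)}{2\sinh(1/2)}\big(\rho(y)^2G(y)^2+2\sigma(y)^2\big)\,dy,\qquad f(\rho,\sigma)=\tfrac12\rho\,(G^2-F),$$ with $G=G(\rho,\sigma)$. Along the solution write $G(t,x)=G(\rho(t),\rho_t(t))(x)$ and $$H(t,x)=\int_0^x\frac{\sinh\big(\int_y^x\rho^2dz-\tfrac12\big)}{2\sinh(1/2)}(\rho^2G^2+2\rho_t^2)(y)\,dy+\int_x^1\frac{\sinh\big(-\int_y^x\rho^2dz-\tfrac12\big)}{2\sinh(1/2)}(\rho^2G^2+2\rho_t^2)(y)\,dy.$$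 *)

theory Defs
  imports "HOL-Analysis.Analysis"
begin

text \<open>Functions on S^1 = R/Z are represented by 1-periodic functions real => real.
  Integrals are Lebesgue integrals; LBINT y=a..b is the oriented interval integral.\<close>

definition periodic1 :: "(real \<Rightarrow> real) \<Rightarrow> bool" where
  "periodic1 g \<longleftrightarrow> (\<forall>x. g (x + 1) = g x)"

definition isL2 :: "(real \<Rightarrow> real) \<Rightarrow> bool" where
  "isL2 g \<longleftrightarrow> g \<in> borel_measurable lborel \<and> set_integrable lborel {0..1} (\<lambda>x. (g x)^2)"

definition L2norm :: "(real \<Rightarrow> real) \<Rightarrow> real" where
  "L2norm g = sqrt (LINT x:{0..1}|lborel. (g x)^2)"

definition has_L2_derivative ::
  "(real \<Rightarrow> real \<Rightarrow> real) \<Rightarrow> (real \<Rightarrow> real) \<Rightarrow> real \<Rightarrow> real set \<Rightarrow> bool" where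
  "has_L2_derivative g g' t S \<longleftrightarrow>
     ((\<lambda>s. L2norm (\<lambda>x. (g s x - g t x) / (s - t) - g' x)) \<longlongrightarrow> 0) (at t within S)"

text \<open>The operators G, F, f of the paper (mu = mean of u0).\<close>
definition Gop :: "real \<Rightarrow> (real \<Rightarrow> real) \<Rightarrow> (real \<Rightarrow> real) \<Rightarrow> real \<Rightarrow> real" where
  "Gop \<mu> \<rho> \<sigma> x =
     (LBINT y=0..ereal x. 2 * \<rho> y * \<sigma> y) + \<mu>
     - (LBINT y=0..1. (LBINT z=0..ereal y. 2 * \<rho> z * \<sigma> z) * (\<rho> y)^2)"

definition Fop :: "real \<Rightarrow> (real \<Rightarrow> real) \<Rightarrow> (real \<Rightarrow> real) \<Rightarrow> real \<Rightarrow> real" where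
  "Fop \<mu> \<rho> \<sigma> x =
     (LBINT y=0..1. cosh (\<bar>LBINT z=ereal y..ereal x. (\<rho> z)^2\<bar> - 1/2) / (2 * sinh (1/2))
        * ((\<rho> y)^2 * (Gop \<mu> \<rho> \<sigma> y)^2 + 2 * (\<sigma> y)^2))"

definition fop :: "real \<Rightarrow> (real \<Rightarrow> real) \<Rightarrow> (real \<Rightarrow> real) \<Rightarrow> real \<Rightarrow> real" where
  "fop \<mu> \<rho> \<sigma> x = 1/2 * \<rho> x * ((Gop \<mu> \<rho> \<sigma> x)^2 - Fop \<mu> \<rho> \<sigma> x)"

text \<open>H evaluated along (rho, sigma) = (rho(t), rho_t(t)).\<close>
definition Hop :: "real \<Rightarrow> (real \<Rightarrow> real) \<Rightarrow> (real \<Rightarrow> real) \<Rightarrow> real \<Rightarrow> real" where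
  "Hop \<mu> \<rho> \<sigma> x =
     (LBINT y=0..ereal x. sinh ((LBINT z=ereal y..ereal x. (\<rho> z)^2) - 1/2) / (2 * sinh (1/2))
        * ((\<rho> y)^2 * (Gop \<mu> \<rho> \<sigma> y)^2 + 2 * (\<sigma> y)^2))
   + (LBINT y=ereal x..1. sinh (- (LBINT z=ereal y..ereal x. (\<rho> z)^2) - 1/2) / (2 * sinh (1/2))
        * ((\<rho> y)^2 * (Gop \<mu> \<rho> \<sigma> y)^2 + 2 * (\<sigma> y)^2))"

text \<open>K(t,x) of the paper, for the solution (rho, v) with v = rho_t.\<close>
definition Kfun :: "real \<Rightarrow> (real \<Rightarrow> real) \<Rightarrow> (real \<Rightarrow> real \<Rightarrow> real) \<Rightarrow> (real \<Rightarrow> real \<Rightarrow> real)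
    \<Rightarrow> real \<Rightarrow> real \<Rightarrow> real" where
  "Kfun \<mu> u0 \<rho> v t x =
     (LBINT y=0..ereal x. (\<rho> t y)^2) + t * u0 0
     - (LBINT \<tau>=0..ereal t. (LBINT s=0..ereal \<tau>. Hop \<mu> (\<rho> s) (v s) 0))"

definition Nset :: "real \<Rightarrow> (real \<Rightarrow> real) \<Rightarrow> (real \<Rightarrow> real \<Rightarrow> real) \<Rightarrow> (real \<Rightarrow> real \<Rightarrow> real)
    \<Rightarrow> real \<Rightarrow> real set" where
  "Nset \<mu> u0 \<rho> v t = {x \<in> {0..<1}. ((\<lambda>y. Kfun \<mu> u0 \<rho> v t y) has_real_derivative 0) (at x)}"

end

theory Submission
  imports Defs
begin

(*
  Write Phi(x) for the integral of rho(t)^2 over [0,x].  As K(t,-) differs from Phi by a constant,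
  N(t) is the set where Phi' = 0, and by Lebesgue's differentiation theorem rho(t) = 0 almost
  everywhere on N(t).

  Suppose the integral of rho_t(t)^2 over N(t) were at least a > 0 for infinitely many bounded t;
  they accumulate at some t0, and let w = rho_t(t0).  By L^2-continuity of rho_t, the integral of
  w^2 over N(p) is at least a/2 - eta^2 for such p near t0.  On N(p) /\ N(q) both rho(p) and rho(q)
  vanish, so differentiability of rho at t0 gives (p - q) w ~ rho(q) - rho(p) = 0 there: the
  integral of w^2 over N(p) /\ N(q) is at most 18 eta^2 for well spread p, q.  For n such points
  the Bonferroni inequality bounds n (a/2 - eta^2) - 18 n^2 eta^2 by the integral of w^2, which
  fails for n large and eta small.  Hence rho_t(t) vanishes a.e. on N(t) outside a countable set of t.
*)

section \<open>Interval integrals\<close>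

lemma interval_integral_eq_indicator: "(LBINT z=ereal a..ereal b. (g::real\<Rightarrow>real) z) =
   (if a \<le> b then (\<integral>z. indicator {a<..<b} z * g z \<partial>lborel) else - (\<integral>z. indicator {b<..<a} z * g z \<partial>lborel))"
  by (simp add: interval_lebesgue_integral_def set_lebesgue_integral_def)

lemma borel_measurable_interval_integral:
  fixes g :: "real \<Rightarrow> real"
  assumes [measurable]: "g \<in> borel_measurable lborel"
  shows "(\<lambda>p::real\<times>real. LBINT z=ereal (fst p)..ereal (snd p). g z) \<in> borel_measurable borel"
proof -
  have "(\<lambda>p::real\<times>real. \<integral>z. indicator {fst p<..<snd p} z * g z \<partial>lborel) \<in> borel_measurable (borel \<Otimes>\<^sub>M borel)"
    by (rule lborel.borel_measurable_lebesgue_integral) (simp add: indicator_def split_beta' of_bool_def; measurable)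
  moreover have "(\<lambda>p::real\<times>real. \<integral>z. indicator {snd p<..<fst p} z * g z \<partial>lborel) \<in> borel_measurable (borel \<Otimes>\<^sub>M borel)"
    by (rule lborel.borel_measurable_lebesgue_integral) (simp add: indicator_def split_beta' of_bool_def; measurable)
  ultimately show ?thesis
    unfolding interval_integral_eq_indicator by (simp add: borel_prod[symmetric]) measurable
qed

lemma measurable_interval_integral:
  fixes g :: "real \<Rightarrow> real"
  assumes "g \<in> borel_measurable lborel" "a \<in> borel_measurable M" "b \<in> borel_measurable M"
  shows "(\<lambda>x. LBINT z=ereal (a x)..ereal (b x). g z) \<in> borel_measurable M"
proof -
  have "(\<lambda>x. (\<lambda>p::real\<times>real. LBINT z=ereal (fst p)..ereal (snd p). g z) (a x, b x)) \<in> borel_measurable M"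
    by (rule measurable_compose[OF _ borel_measurable_interval_integral[OF assms(1)]]) (use assms in measurable)
  then show ?thesis by simp
qed

lemma measurable_interval_integral_from_0:
  fixes g :: "real \<Rightarrow> real"
  assumes "g \<in> borel_measurable lborel" "b \<in> borel_measurable M"
  shows "(\<lambda>x. LBINT z=0..ereal (b x). g z) \<in> borel_measurable M"
  using measurable_interval_integral[OF assms(1) _ assms(2), of "\<lambda>_. 0"] by (simp add: zero_ereal_def)

lemma interval_integral_diff_Icc:
  fixes g :: "real \<Rightarrow> real"
  assumes g: "set_integrable lborel {0..1} g" and ab: "0 \<le> a" "a \<le> b" "b \<le> 1"
  shows "(LBINT y=0..ereal b. g y) - (LBINT y=0..ereal a. g y) = (LINT y:{a..b}|lborel. g y)"
proof -
  have "set_integrable lborel (einterval 0 (ereal b)) g"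
    by (rule set_integrable_subset[OF g]) (use ab in \<open>auto simp: einterval_def\<close>)
  then have int: "interval_lebesgue_integrable lborel (min 0 (min (ereal a) (ereal b))) (max 0 (max (ereal a) (ereal b))) g"
    using ab by (simp add: interval_lebesgue_integrable_def min_def max_def)
  have "(LBINT y=0..ereal a. g y) + (LBINT y=ereal a..ereal b. g y) = (LBINT y=0..ereal b. g y)"
    by (rule interval_integral_sum[OF int])
  moreover have "(LBINT y=ereal a..ereal b. g y) = (LINT y:{a..b}|lborel. g y)"
    using interval_integral_Icc[OF ab(2), of g] by simp
  ultimately show ?thesis by simp
qed

lemma interval_integral_from_0_eq_Icc:
  fixes h :: "real \<Rightarrow> real"
  assumes h: "set_integrable lborel {0..1} h" and x: "0 \<le> x" "x \<le> 1"
  shows "(LBINT y=0..ereal x. h y) = (LINT y:{0..x}|lborel. h y)"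
  using interval_integral_diff_Icc[OF h order_refl x(1) x(2)] by (simp add: zero_ereal_def)

lemma set_integral_mono_subset_nonneg:
  fixes g :: "real \<Rightarrow> real"
  assumes "set_integrable lborel B g" "A \<in> sets borel" "A \<subseteq> B" "\<And>x. 0 \<le> g x"
  shows "(LINT x:A|lborel. g x) \<le> (LINT x:B|lborel. g x)"
proof -
  have iA: "set_integrable lborel A g" by (rule set_integrable_subset[OF assms(1)]) (use assms in auto)
  show ?thesis unfolding set_lebesgue_integral_def
    by (rule integral_mono) (use iA assms in \<open>auto simp: set_integrable_def indicator_def\<close>)
qed

lemma abs_interval_integral_from_0_le:
  fixes h :: "real \<Rightarrow> real"
  assumes h: "set_integrable lborel {0..1} h" and x: "0 \<le> x" "x \<le> 1"
  shows "\<bar>LBINT y=0..ereal x. h y\<bar> \<le> (LINT y:{0..1}|lborel. \<bar>h y\<bar>)"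
proof -
  have "\<bar>LINT y:{0..x}|lborel. h y\<bar> \<le> (LINT y:{0..x}|lborel. \<bar>h y\<bar>)"
    unfolding set_lebesgue_integral_def
    using integral_abs_bound[of lborel "\<lambda>y. indicator {0..x} y *\<^sub>R h y"] by (simp add: abs_mult)
  also have "\<dots> \<le> (LINT y:{0..1}|lborel. \<bar>h y\<bar>)"
    by (rule set_integral_mono_subset_nonneg[OF set_integrable_abs[OF h]]) (use x in auto)
  finally show ?thesis using interval_integral_from_0_eq_Icc[OF h x] by simp
qed

lemma abs_interval_integral_le_nonneg:
  fixes g :: "real \<Rightarrow> real"
  assumes g: "set_integrable lborel {0..1} g" and gnn: "\<And>x. 0 \<le> g x"
    and x: "x \<in> {0..1}" and y: "y \<in> {0..1}"
  shows "\<bar>LBINT z=ereal y..ereal x. g z\<bar> \<le> (LINT z:{0..1}|lborel. g z)"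
proof -
  let ?R = "(LINT z:{0..1}|lborel. g z)"
  have rng: "0 \<le> (LBINT z=0..ereal u. g z) \<and> (LBINT z=0..ereal u. g z) \<le> ?R" if u: "u \<in> {0..1}" for u
  proof -
    have e: "(LBINT z=0..ereal u. g z) = (LINT z:{0..u}|lborel. g z)" using interval_integral_from_0_eq_Icc[OF g] u by auto
    have "0 \<le> (LINT z:{0..u}|lborel. g z)" unfolding set_lebesgue_integral_def
      by (rule Bochner_Integration.integral_nonneg) (simp add: gnn)
    moreover have "(LINT z:{0..u}|lborel. g z) \<le> ?R"
      by (rule set_integral_mono_subset_nonneg[OF g _ _ gnn]) (use u in auto)
    ultimately show ?thesis using e by simp
  qed
  have "set_integrable lborel (einterval 0 (ereal (max y x))) g"
    by (rule set_integrable_subset[OF g]) (use x y in \<open>auto simp: einterval_def max_def split: if_splits\<close>)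
  then have int: "interval_lebesgue_integrable lborel (min 0 (min (ereal y) (ereal x))) (max 0 (max (ereal y) (ereal x))) g"
    using x y by (cases "y \<le> x") (auto simp: interval_lebesgue_integrable_def min_def max_def)
  have "(LBINT z=0..ereal y. g z) + (LBINT z=ereal y..ereal x. g z) = (LBINT z=0..ereal x. g z)"
    by (rule interval_integral_sum[OF int])
  then show ?thesis using rng[OF x] rng[OF y] by linarith
qed

lemma continuous_on_interval_integral_from_0:
  fixes g :: "real \<Rightarrow> real"
  assumes g: "set_integrable lborel {0..1} g"
  shows "continuous_on {0..1} (\<lambda>x. LBINT y=0..ereal x. g y)"
proof (rule continuous_on_eq[OF indefinite_integral_continuous_1])
  show "g integrable_on {0..1}" using set_borel_integral_eq_integral(1)[OF g] .
  show "integral {0..x} g = (LBINT y=0..ereal x. g y)" if x: "x \<in> {0..1}" for x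
    using x interval_integral_from_0_eq_Icc[OF g]
      set_borel_integral_eq_integral(2)[OF set_integrable_subset[OF g, of "{0..x}"]] by auto
qed

lemma interval_integral_01_eq_indicator: "(LBINT y=0..1. (f::real\<Rightarrow>real) y) = (\<integral>y. indicator {0<..<1} y * f y \<partial>lborel)"
  by (simp add: interval_lebesgue_integral_def set_lebesgue_integral_def einterval_def zero_ereal_def one_ereal_def
      greaterThanLessThan_def greaterThan_def lessThan_def Collect_conj_eq[symmetric])

section \<open>Points where an indefinite integral has derivative zero\<close>

lemma has_real_derivative_add_const_iff:
  "((\<lambda>y. \<Phi> y + c) has_real_derivative 0) (at x) \<longleftrightarrow> (\<Phi> has_real_derivative 0) (at x)"
proof
  assume "((\<lambda>y. \<Phi> y + c) has_real_derivative 0) (at x)"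
  from DERIV_diff[OF this DERIV_const[of c]] show "(\<Phi> has_real_derivative 0) (at x)" by simp
next
  assume "(\<Phi> has_real_derivative 0) (at x)"
  from DERIV_add[OF this DERIV_const[of c]] show "((\<lambda>y. \<Phi> y + c) has_real_derivative 0) (at x)" by simp
qed

lemma inverse_Suc_less: "0 < s \<Longrightarrow> \<exists>m::nat. 1 / (real m + 1) < (s::real)"
proof -
  assume s: "s > 0"
  obtain m :: nat where "1 / s < real m" using reals_Archimedean2 by blast
  then have "1 < s * (real m + 1)" using s by (simp add: field_simps)
  then show ?thesis using s by (intro exI[of _ m]) (simp add: field_simps)
qed

lemma abs_increment_le_of_rational_increments:
  fixes \<Phi> :: "real \<Rightarrow> real"
  assumes cont: "\<And>y. \<bar>y - x\<bar> < s \<Longrightarrow> isCont \<Phi> y"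
    and rat: "\<And>r. real_of_rat r \<noteq> 0 \<Longrightarrow> \<bar>real_of_rat r\<bar> < s \<Longrightarrow>
        \<bar>\<Phi> (x + real_of_rat r) - \<Phi> x\<bar> \<le> c * \<bar>real_of_rat r\<bar>"
    and h: "h \<noteq> 0" "\<bar>h\<bar> < s"
  shows "\<bar>\<Phi> (x + h) - \<Phi> x\<bar> \<le> c * \<bar>h\<bar>"
proof (rule ccontr)
  assume exceeds: "\<not> ?thesis"
  define F where "F y = \<bar>\<Phi> (x + y) - \<Phi> x\<bar> - c * \<bar>y\<bar>" for y
  have Fh: "F h > 0" using exceeds by (simp add: F_def)
  have "isCont \<Phi> (x + h)" using cont h by simp
  then have shifted: "isCont (\<lambda>y. \<Phi> (x + y)) h"
    by (rule isCont_o2[where f="\<lambda>y. x + y" and g=\<Phi>, rotated]) (intro continuous_intros)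
  have "isCont F h" unfolding F_def by (intro continuous_intros shifted)
  then have "\<forall>\<^sub>F y in at h. F y > 0"
    using Fh by (simp add: isCont_def order_tendstoD(1))
  then obtain d where d: "d > 0" "\<And>y. y \<noteq> h \<Longrightarrow> dist y h < d \<Longrightarrow> F y > 0"
    unfolding eventually_at by auto
  define d' where "d' = min d (min \<bar>h\<bar> (s - \<bar>h\<bar>))"
  have d'_pos: "d' > 0" using d h by (auto simp: d'_def)
  obtain q where q: "q \<in> \<rat>" "h - d' < q" "q < h + d'"
    using Rats_dense_in_real[of "h - d'" "h + d'"] d'_pos by auto
  obtain r where r: "q = real_of_rat r" using q(1) Rats_cases by blast
  have qh: "\<bar>q - h\<bar> < d'" using q by auto
  then have "q \<noteq> 0" "\<bar>q\<bar> < s" by (auto simp: d'_def)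
  then have "\<bar>\<Phi> (x + q) - \<Phi> x\<bar> \<le> c * \<bar>q\<bar>" using rat[of r] r by simp
  then have "\<not> F q > 0" by (simp add: F_def)
  moreover have "F q > 0" using d Fh qh by (cases "q = h") (auto simp: d'_def dist_real_def)
  ultimately show False by blast
qed

text \<open>This characterisation of a zero derivative makes the set of such points Borel.\<close>

definition small_rational_increments :: "(real \<Rightarrow> real) \<Rightarrow> real \<Rightarrow> bool" where
  "small_rational_increments \<Phi> x \<longleftrightarrow> (\<forall>n::nat. \<exists>m::nat. \<forall>r::rat.
     real_of_rat r \<noteq> 0 \<and> \<bar>real_of_rat r\<bar> < 1 / (real m + 1) \<longrightarrow>
       \<bar>\<Phi> (x + real_of_rat r) - \<Phi> x\<bar> \<le> \<bar>real_of_rat r\<bar> / (real n + 1))"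

lemma has_real_derivative_zero_imp_small_rational_increments:
  fixes \<Phi> :: "real \<Rightarrow> real"
  assumes "(\<Phi> has_real_derivative 0) (at x)"
  shows "small_rational_increments \<Phi> x"
  unfolding small_rational_increments_def
proof
  fix n :: nat
  have "(\<lambda>h. (\<Phi> (x + h) - \<Phi> x) / h) \<midarrow>0\<rightarrow> 0" using assms by (simp add: DERIV_def)
  moreover have "1 / (real n + 1) > 0" by simp
  ultimately obtain s where s: "s > 0" and quot: "\<And>h. h \<noteq> 0 \<and> norm (h - 0) < s \<Longrightarrow>
      norm ((\<Phi> (x + h) - \<Phi> x) / h - 0) < 1 / (real n + 1)"
    unfolding LIM_eq by metis
  obtain m :: nat where m: "1 / (real m + 1) < s" using inverse_Suc_less[OF s] by blast
  show "\<exists>m::nat. \<forall>r::rat. real_of_rat r \<noteq> 0 \<and> \<bar>real_of_rat r\<bar> < 1 / (real m + 1) \<longrightarrow>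
     \<bar>\<Phi> (x + real_of_rat r) - \<Phi> x\<bar> \<le> \<bar>real_of_rat r\<bar> / (real n + 1)"
  proof (intro exI[of _ m] allI impI)
    fix r :: rat
    let ?q = "real_of_rat r"
    assume q: "?q \<noteq> 0 \<and> \<bar>?q\<bar> < 1 / (real m + 1)"
    then have "\<bar>\<Phi> (x + ?q) - \<Phi> x\<bar> / \<bar>?q\<bar> < 1 / (real n + 1)"
      using quot[of ?q] m by auto
    then show "\<bar>\<Phi> (x + ?q) - \<Phi> x\<bar> \<le> \<bar>?q\<bar> / (real n + 1)"
      using q by (simp add: divide_less_eq mult.commute)
  qed
qed

lemma small_rational_increments_imp_has_real_derivative_zero:
  fixes \<Phi> :: "real \<Rightarrow> real"
  assumes cont: "continuous_on U \<Phi>" and U: "open U" and x: "x \<in> U"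
    and R: "small_rational_increments \<Phi> x"
  shows "(\<Phi> has_real_derivative 0) (at x)"
proof -
  obtain \<delta> where \<delta>: "\<delta> > 0" "ball x \<delta> \<subseteq> U" using U x open_contains_ball by blast
  have "(\<lambda>h. (\<Phi> (x + h) - \<Phi> x) / h) \<midarrow>0\<rightarrow> 0"
    unfolding LIM_eq
  proof (intro allI impI)
    fix e :: real assume e: "e > 0"
    obtain n :: nat where n: "1 / (real n + 1) < e" using inverse_Suc_less[OF e] by blast
    obtain m :: nat where m: "\<forall>r::rat. real_of_rat r \<noteq> 0 \<and> \<bar>real_of_rat r\<bar> < 1 / (real m + 1) \<longrightarrow>
        \<bar>\<Phi> (x + real_of_rat r) - \<Phi> x\<bar> \<le> \<bar>real_of_rat r\<bar> / (real n + 1)"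
      using R unfolding small_rational_increments_def by blast
    define s where "s = min (1 / (real m + 1)) \<delta>"
    have s_pos: "s > 0" using \<delta> by (simp add: s_def)
    have bound: "\<bar>\<Phi> (x + h) - \<Phi> x\<bar> \<le> 1 / (real n + 1) * \<bar>h\<bar>" if "h \<noteq> 0" "\<bar>h\<bar> < s" for h
    proof (rule abs_increment_le_of_rational_increments[OF _ _ that])
      show "isCont \<Phi> y" if "\<bar>y - x\<bar> < s" for y
      proof -
        have "y \<in> ball x \<delta>" using that by (simp add: s_def dist_real_def abs_minus_commute)
        with \<delta>(2) cont U show ?thesis by (auto simp: continuous_on_eq_continuous_at)
      qed
      show "\<bar>\<Phi> (x + real_of_rat r) - \<Phi> x\<bar> \<le> 1 / (real n + 1) * \<bar>real_of_rat r\<bar>"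
        if "real_of_rat r \<noteq> 0" "\<bar>real_of_rat r\<bar> < s" for r
        using m[rule_format, of r] that by (auto simp: s_def)
    qed
    show "\<exists>s>0. \<forall>h. h \<noteq> 0 \<and> norm (h - 0) < s \<longrightarrow> norm ((\<Phi> (x + h) - \<Phi> x) / h - 0) < e"
    proof (intro exI[of _ s] conjI allI impI)
      show "s > 0" by (rule s_pos)
      fix h :: real assume h: "h \<noteq> 0 \<and> norm (h - 0) < s"
      then have "\<bar>\<Phi> (x + h) - \<Phi> x\<bar> / \<bar>h\<bar> \<le> 1 / (real n + 1)"
        using bound by (simp add: divide_le_eq)
      then show "norm ((\<Phi> (x + h) - \<Phi> x) / h - 0) < e" using n by simp
    qed
  qed
  then show ?thesis by (simp add: DERIV_def)
qed

lemma sets_borel_has_real_derivative_zero: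
  fixes \<Phi> :: "real \<Rightarrow> real"
  assumes cont: "continuous_on U \<Phi>" and U: "open U" and [measurable]: "\<Phi> \<in> borel_measurable borel"
  shows "{x \<in> U. (\<Phi> has_real_derivative 0) (at x)} \<in> sets borel"
proof -
  have [measurable]: "U \<in> sets borel" using U by simp
  have eq: "{x \<in> U. (\<Phi> has_real_derivative 0) (at x)} = {x \<in> U. small_rational_increments \<Phi> x}"
    using has_real_derivative_zero_imp_small_rational_increments
      small_rational_increments_imp_has_real_derivative_zero[OF cont U] by blast
  show ?thesis unfolding eq small_rational_increments_def by measurable
qed

lemma right_difference_quotient_limit_eq_zero:
  fixes \<Phi> :: "real \<Rightarrow> real"
  assumes der: "(\<Phi> has_real_derivative 0) (at x)"
    and right: "\<And>e. 0 < e \<Longrightarrow> \<exists>d>0. \<forall>h. 0 < h \<and> h < d \<longrightarrow> \<bar>(\<Phi> (x + h) - \<Phi> x) / h - c\<bar> < e"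
  shows "c = 0"
proof (rule tendsto_unique[OF trivial_limit_at_right_real])
  show "((\<lambda>h. (\<Phi> (x + h) - \<Phi> x) / h) \<longlongrightarrow> c) (at_right 0)"
    unfolding tendsto_iff eventually_at_right_field dist_real_def using right by blast
  have "((\<lambda>h. (\<Phi> (x + h) - \<Phi> x) / h) \<longlongrightarrow> 0) (at 0)"
    using der by (simp add: DERIV_def)
  then show "((\<lambda>h. (\<Phi> (x + h) - \<Phi> x) / h) \<longlongrightarrow> 0) (at_right 0)"
    by (rule tendsto_mono[OF at_le, rotated]) simp
qed

lemma indefinite_integral_deriv_zero_ae:
  fixes g :: "real \<Rightarrow> real"
  assumes g: "set_integrable lborel {0..1} g"
  shows "AE x in lborel. x \<in> {0<..<1} \<longrightarrow>
           ((\<lambda>y. LBINT z=0..ereal y. g z) has_real_derivative 0) (at x) \<longrightarrow> g x = 0"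
proof -
  define f where "f x = (if x \<in> {0..1} then g x else 0)" for x
  have "f integrable_on UNIV"
    unfolding f_def integrable_restrict_UNIV by (rule set_borel_integral_eq_integral(1)[OF g])
  then have "f integrable_on cbox a b" for a b :: real
    by (rule integrable_on_subcbox) simp
  then obtain N where N: "negligible N" and
    lebesgue_point: "\<And>x e. x \<notin> N \<Longrightarrow> 0 < e \<Longrightarrow> \<exists>d>0. \<forall>h. 0 < h \<and> h < d \<longrightarrow>
        norm (integral (cbox x (x + h *\<^sub>R One)) f /\<^sub>R h ^ DIM(real) - f x) < e"
    by (rule integrable_ccontinuous_explicit) blast
  define \<Phi> where "\<Phi> y = (LBINT z=0..ereal y. g z)" for y
  have "g x = 0" if x: "x \<notin> N" "x \<in> {0<..<1}" and der: "(\<Phi> has_real_derivative 0) (at x)" for x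
  proof (rule right_difference_quotient_limit_eq_zero[OF der])
    fix e :: real assume "0 < e"
    then obtain d where d: "d > 0" and avg: "\<forall>h. 0 < h \<and> h < d \<longrightarrow>
        norm (integral (cbox x (x + h *\<^sub>R One)) f /\<^sub>R h ^ DIM(real) - f x) < e"
      using lebesgue_point[OF x(1)] by blast
    have "\<bar>(\<Phi> (x + h) - \<Phi> x) / h - g x\<bar> < e" if h: "0 < h" "h < min d (1 - x)" for h
    proof -
      have "integral {x..x + h} f = integral {x..x + h} g"
        by (rule integral_cong) (use x h in \<open>simp add: f_def\<close>)
      also have "\<dots> = (LINT y:{x..x + h}|lborel. g y)"
        by (rule set_borel_integral_eq_integral(2)[symmetric], rule set_integrable_subset[OF g])
          (use x h in auto)
      also have "\<dots> = \<Phi> (x + h) - \<Phi> x"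
        unfolding \<Phi>_def by (rule interval_integral_diff_Icc[OF g, symmetric]) (use x h in auto)
      finally have "integral {x..x + h} f = \<Phi> (x + h) - \<Phi> x" .
      then show ?thesis
        using avg[rule_format, of h] h x by (simp add: cbox_interval f_def divide_inverse_commute)
    qed
    then show "\<exists>d>0. \<forall>h. 0 < h \<and> h < d \<longrightarrow> \<bar>(\<Phi> (x + h) - \<Phi> x) / h - g x\<bar> < e"
      using d x by (intro exI[of _ "min d (1 - x)"]) auto
  qed
  then have "{x \<in> space lebesgue. \<not> (x \<in> {0<..<1} \<longrightarrow>
      ((\<lambda>y. LBINT z=0..ereal y. g z) has_real_derivative 0) (at x) \<longrightarrow> g x = 0)} \<subseteq> N"
    unfolding \<Phi>_def[abs_def] by blast
  moreover have "N \<in> null_sets lebesgue" using N by (simp add: negligible_iff_null_sets)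
  ultimately show ?thesis by (subst AE_completion_iff[symmetric]) (rule AE_I')
qed

section \<open>Square integrable functions on the unit interval\<close>

lemma set_integrable_sq_isL2_subset:
  assumes "isL2 f" "A \<in> sets borel" "A \<subseteq> {0..1}"
  shows "set_integrable lborel A (\<lambda>x. (f x)^2)"
  by (rule set_integrable_subset[of _ "{0..1}"]) (use assms in \<open>auto simp: isL2_def\<close>)

lemma isL2_lin:
  assumes "isL2 f" "isL2 g"
  shows "isL2 (\<lambda>x. a * f x + b * g x)"
proof -
  have [measurable]: "f \<in> borel_measurable borel" "g \<in> borel_measurable borel" using assms by (auto simp: isL2_def)
  have i: "set_integrable lborel {0..1} (\<lambda>x. 2*a^2 * (f x)^2 + 2*b^2*(g x)^2)"
    using assms by (auto simp: isL2_def)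
  have "set_integrable lborel {0..1} (\<lambda>x. (a * f x + b * g x)^2)"
  proof (rule set_integrable_bound[OF i])
    show "set_borel_measurable lborel {0..1} (\<lambda>x. (a * f x + b * g x)^2)"
      unfolding set_borel_measurable_def by measurable
    have "(a * f x + b * g x)^2 \<le> 2*a^2 * (f x)^2 + 2*b^2*(g x)^2" for x
    proof -
      have "0 \<le> (a * f x - b * g x)^2" by simp
      then show ?thesis by (simp add: power2_eq_square algebra_simps)
    qed
    then show "AE x in lborel. x \<in> {0..1} \<longrightarrow> norm ((a * f x + b * g x)^2) \<le> norm (2*a^2 * (f x)^2 + 2*b^2*(g x)^2)"
      by auto
  qed
  then show ?thesis unfolding isL2_def by simp
qed

lemma isL2_add: "isL2 f \<Longrightarrow> isL2 g \<Longrightarrow> isL2 (\<lambda>x. f x + g x)"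
  using isL2_lin[of f g 1 1] by simp

lemma isL2_diff: "isL2 f \<Longrightarrow> isL2 g \<Longrightarrow> isL2 (\<lambda>x. f x - g x)"
  using isL2_lin[of f g 1 "-1"] by simp

lemma isL2_scale: "isL2 f \<Longrightarrow> isL2 (\<lambda>x. c * f x)"
  using isL2_lin[of f f c 0] by simp

lemma set_integral_sq_nonneg: "0 \<le> (LINT x:A|lborel. (f x)^2 :: real)"
  unfolding set_lebesgue_integral_def by (rule Bochner_Integration.integral_nonneg) (auto simp: indicator_def)

lemma set_integral_sq_scale: "(LINT x:A|lborel. (c * f x)^2) = c^2 * (LINT x:A|lborel. (f x)^2 :: real)"
  by (simp add: power_mult_distrib)

lemma set_integral_sq_completion:
  fixes f :: "real \<Rightarrow> real"
  assumes "A \<in> sets borel" "f \<in> borel_measurable borel"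
  shows "(LINT x:A|lebesgue. (f x)^2) = (LINT x:A|lborel. (f x)^2)"
  unfolding set_lebesgue_integral_def by (rule integral_completion) (use assms in measurable)

lemma set_integral_sq_le_unit:
  assumes "isL2 f" "A \<in> sets borel" "A \<subseteq> {0..1}"
  shows "(LINT x:A|lborel. (f x)^2) \<le> (LINT x:{0..1}|lborel. (f x)^2)"
  by (rule set_integral_mono_subset_nonneg) (use assms in \<open>auto simp: isL2_def\<close>)

lemma set_integral_sq_add_le:
  assumes "isL2 f" "isL2 g" "A \<in> sets borel" "A \<subseteq> {0..1}"
  shows "(LINT x:A|lborel. (f x + g x)^2) \<le> 2 * (LINT x:A|lborel. (f x)^2) + 2 * (LINT x:A|lborel. (g x)^2 :: real)"
proof -
  have i1: "set_integrable lborel A (\<lambda>x. (f x + g x)^2)" using set_integrable_sq_isL2_subset[OF isL2_add[OF assms(1,2)] assms(3,4)] .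
  have i2: "set_integrable lborel A (\<lambda>x. (f x)^2)" using set_integrable_sq_isL2_subset assms by blast
  have i3: "set_integrable lborel A (\<lambda>x. (g x)^2)" using set_integrable_sq_isL2_subset assms by blast
  have "(LINT x:A|lborel. (f x + g x)^2) \<le> (LINT x:A|lborel. 2 * (f x)^2 + 2 * (g x)^2)"
  proof (rule set_integral_mono[OF i1])
    show "set_integrable lborel A (\<lambda>x. 2 * (f x)^2 + 2 * (g x)^2)" using i2 i3 by auto
    show "(f x + g x)^2 \<le> 2 * (f x)^2 + 2 * (g x)^2" for x
    proof -
      have "0 \<le> (f x - g x)^2" by simp
      then show ?thesis by (simp add: power2_eq_square algebra_simps)
    qed
  qed
  also have "\<dots> = 2 * (LINT x:A|lborel. (f x)^2) + 2 * (LINT x:A|lborel. (g x)^2)"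
    using i2 i3 by simp
  finally show ?thesis .
qed

lemma sq_integral_less_of_L2norm_less:
  assumes "L2norm f < \<eta>"
  shows "(LINT x:{0..1}|lborel. (f x)^2) < \<eta>^2"
proof -
  let ?Q = "(LINT x:{0..1}|lborel. (f x)^2)"
  have Q0: "0 \<le> ?Q" by (rule set_integral_sq_nonneg)
  have "sqrt ?Q < \<eta>" using assms by (simp add: L2norm_def)
  then have "(sqrt ?Q)^2 < \<eta>^2" using Q0 by (intro power_strict_mono) auto
  then show ?thesis using Q0 by simp
qed

lemma has_L2_derivative_eventually_remainder_le:
  fixes \<rho> :: "real \<Rightarrow> real \<Rightarrow> real"
  assumes d: "has_L2_derivative \<rho> w t S" and e: "\<eta> > 0"
  shows "\<forall>\<^sub>F s in at t within S.
      (LINT x:{0..1}|lborel. (\<rho> s x - \<rho> t x - (s - t) * w x)^2) \<le> \<eta>^2 * (s - t)^2"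
proof -
  have "\<forall>\<^sub>F s in at t within S. L2norm (\<lambda>x. (\<rho> s x - \<rho> t x) / (s - t) - w x) < \<eta>"
    using d e unfolding has_L2_derivative_def by (rule order_tendstoD(2))
  moreover have "\<forall>\<^sub>F s in at t within S. s \<noteq> t" by (simp add: eventually_at_filter)
  ultimately show ?thesis
  proof eventually_elim
    case (elim s)
    have "(s - t) * ((\<rho> s x - \<rho> t x) / (s - t)) = \<rho> s x - \<rho> t x" for x
      using elim by simp
    then have "(\<rho> s x - \<rho> t x - (s - t) * w x)^2 = ((s - t) * ((\<rho> s x - \<rho> t x) / (s - t) - w x))^2" for x
      by (simp add: right_diff_distrib)
    then have "(LINT x:{0..1}|lborel. (\<rho> s x - \<rho> t x - (s - t) * w x)^2)
        = (s - t)^2 * (LINT x:{0..1}|lborel. ((\<rho> s x - \<rho> t x) / (s - t) - w x)^2)"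
      by (simp only: set_integral_sq_scale)
    also have "\<dots> \<le> (s - t)^2 * \<eta>^2"
      using sq_integral_less_of_L2norm_less[OF elim(1)] by (intro mult_left_mono) auto
    finally show ?case by (simp add: mult.commute)
  qed
qed

lemma has_L2_derivative_eventually_sq_diff_le:
  fixes v :: "real \<Rightarrow> real \<Rightarrow> real"
  assumes d: "has_L2_derivative v f t S" and fL2: "isL2 f" and L2: "\<And>s. s \<in> S \<Longrightarrow> isL2 (v s)"
    and tS: "t \<in> S"
  shows "\<forall>\<^sub>F s in at t within S. (LINT x:{0..1}|lborel. (v s x - v t x)^2)
           \<le> (2 + 2 * (LINT x:{0..1}|lborel. (f x)^2)) * (s - t)^2"
proof -
  have "\<forall>\<^sub>F s in at t within S. L2norm (\<lambda>x. (v s x - v t x) / (s - t) - f x) < 1"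
    using d unfolding has_L2_derivative_def by (rule order_tendstoD(2)) simp
  moreover have "\<forall>\<^sub>F s in at t within S. s \<in> S \<and> s \<noteq> t"
    by (simp add: eventually_at_filter)
  ultimately show ?thesis
  proof eventually_elim
    case (elim s)
    define qv where "qv x = (v s x - v t x) / (s - t)" for x
    have "isL2 (\<lambda>x. (1 / (s - t)) * (v s x - v t x))"
      using elim by (intro isL2_scale isL2_diff L2 tS) auto
    then have L2qv: "isL2 qv" by (simp add: qv_def[abs_def])
    have L2d: "isL2 (\<lambda>x. qv x - f x)" by (rule isL2_diff[OF L2qv fL2])
    have "(LINT x:{0..1}|lborel. (qv x)^2) = (LINT x:{0..1}|lborel. ((qv x - f x) + f x)^2)" by simp
    also have "\<dots> \<le> 2 * (LINT x:{0..1}|lborel. (qv x - f x)^2) + 2 * (LINT x:{0..1}|lborel. (f x)^2)"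
      by (rule set_integral_sq_add_le[OF L2d fL2]) auto
    also have "(LINT x:{0..1}|lborel. (qv x - f x)^2) < 1^2"
      using sq_integral_less_of_L2norm_less elim unfolding qv_def by blast
    finally have "(LINT x:{0..1}|lborel. (qv x)^2) \<le> 2 + 2 * (LINT x:{0..1}|lborel. (f x)^2)" by simp
    moreover have "(v s x - v t x)^2 = ((s - t) * qv x)^2" for x
      using elim by (simp add: qv_def)
    ultimately show ?case
      by (simp only: set_integral_sq_scale mult.commute[of _ "(s - t)^2"]) (simp add: mult_left_mono)
  qed
qed

lemma has_L2_derivative_imp_L2_continuous:
  fixes v :: "real \<Rightarrow> real \<Rightarrow> real"
  assumes "has_L2_derivative v f t S" "isL2 f" "\<And>s. s \<in> S \<Longrightarrow> isL2 (v s)" "t \<in> S"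
  shows "((\<lambda>s. L2norm (\<lambda>x. v s x - v t x)) \<longlongrightarrow> 0) (at t within S)"
proof (rule tendsto_sandwich)
  define C where "C = 2 + 2 * (LINT x:{0..1}|lborel. (f x)^2)"
  show "\<forall>\<^sub>F s in at t within S. 0 \<le> L2norm (\<lambda>x. v s x - v t x)"
    by (simp add: L2norm_def set_integral_sq_nonneg)
  show "\<forall>\<^sub>F s in at t within S. L2norm (\<lambda>x. v s x - v t x) \<le> sqrt (C * (s - t)^2)"
    using has_L2_derivative_eventually_sq_diff_le[OF assms]
  proof (rule eventually_mono)
    fix s
    assume "(LINT x:{0..1}|lborel. (v s x - v t x)^2) \<le> (2 + 2 * (LINT x:{0..1}|lborel. (f x)^2)) * (s - t)^2"
    then show "L2norm (\<lambda>x. v s x - v t x) \<le> sqrt (C * (s - t)^2)"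
      unfolding L2norm_def C_def by (rule real_sqrt_le_mono)
  qed
  show "((\<lambda>s. sqrt (C * (s - t)^2)) \<longlongrightarrow> 0) (at t within S)"
    by (rule tendsto_eq_intros refl | simp)+
qed (rule tendsto_const)

section \<open>Energy of the velocity on the zero sets\<close>

lemma indicator_Union_Bonferroni:
  fixes N :: "'a \<Rightarrow> 'b set"
  assumes P: "finite P"
  shows "(\<Sum>p\<in>P. indicator (N p) x) - (\<Sum>pq\<in>{pq\<in>P\<times>P. fst pq \<noteq> snd pq}. indicator (N (fst pq) \<inter> N (snd pq)) x)
           \<le> (indicator (\<Union>p\<in>P. N p) x :: real)"
proof -
  define A where "A = {p\<in>P. x \<in> N p}"
  have fA: "finite A" using P by (simp add: A_def)
  have s1: "(\<Sum>p\<in>P. indicator (N p) x :: real) = real (card A)"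
    using P by (simp add: indicator_def A_def Int_def conj_commute)
  have fPP: "finite {pq\<in>P\<times>P. fst pq \<noteq> snd pq}" using P by simp
  have s2: "(\<Sum>pq\<in>{pq\<in>P\<times>P. fst pq \<noteq> snd pq}. indicator (N (fst pq) \<inter> N (snd pq)) x :: real)
        = real (card {pq\<in>A\<times>A. fst pq \<noteq> snd pq})"
  proof -
    have "(\<Sum>pq\<in>{pq\<in>P\<times>P. fst pq \<noteq> snd pq}. indicator (N (fst pq) \<inter> N (snd pq)) x :: real)
       = real (card ({pq\<in>P\<times>P. fst pq \<noteq> snd pq} \<inter> {pq. x \<in> N (fst pq) \<inter> N (snd pq)}))"
      using fPP by (simp add: indicator_def)
    also have "{pq\<in>P\<times>P. fst pq \<noteq> snd pq} \<inter> {pq. x \<in> N (fst pq) \<inter> N (snd pq)} = {pq\<in>A\<times>A. fst pq \<noteq> snd pq}"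
      by (auto simp: A_def)
    finally show ?thesis .
  qed
  have c2: "card {pq\<in>A\<times>A. fst pq \<noteq> snd pq} = card A * card A - card A"
  proof -
    have e: "{pq\<in>A\<times>A. fst pq \<noteq> snd pq} = A\<times>A - (\<lambda>p. (p,p)) ` A" by auto
    have "card ((\<lambda>p. (p,p)) ` A) = card A" by (rule card_image) (auto simp: inj_on_def)
    then show ?thesis unfolding e using fA
      by (subst card_Diff_subset) (auto simp: card_cartesian_product)
  qed
  show ?thesis
  proof (cases "A = {}")
    case True
    then show ?thesis using s1 s2 by (simp add: indicator_def)
  next
    case False
    then have k: "card A \<ge> 1" using fA by (simp add: Suc_le_eq card_gt_0_iff)
    have u: "indicator (\<Union>p\<in>P. N p) x = (1::real)" using False by (auto simp: A_def indicator_def)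
    have "real (card A * card A - card A) = real (card A) * real (card A) - real (card A)"
      using k by simp
    moreover have "real (card A) - (real (card A) * real (card A) - real (card A)) \<le> 1"
    proof -
      have "0 \<le> (real (card A) - 1)^2" by simp
      then show ?thesis by (simp add: power2_eq_square algebra_simps)
    qed
    ultimately show ?thesis using s1 s2 c2 u by simp
  qed
qed

lemma set_integral_Union_Bonferroni:
  fixes g :: "real \<Rightarrow> real" and N :: "'a \<Rightarrow> real set"
  assumes P: "finite P" and g: "set_integrable lborel A g" and g_nonneg: "\<And>x. 0 \<le> g x"
    and N: "\<And>p. p \<in> P \<Longrightarrow> N p \<in> sets borel \<and> N p \<subseteq> A"
  shows "(\<Sum>p\<in>P. (LINT x:N p|lborel. g x))
      - (\<Sum>pq\<in>{pq\<in>P\<times>P. fst pq \<noteq> snd pq}. (LINT x:N (fst pq) \<inter> N (snd pq)|lborel. g x))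
      \<le> (LINT x:A|lborel. g x)"
proof -
  define PP where "PP = {pq\<in>P\<times>P. fst pq \<noteq> snd pq}"
  let ?U = "\<Union>p\<in>P. N p"
  have U: "?U \<in> sets borel" "?U \<subseteq> A" using N P by auto
  have int: "integrable lborel (\<lambda>x. indicator B x * g x)" if "B \<in> sets borel" "B \<subseteq> A" for B
    using set_integrable_subset[OF g, of B] that by (simp add: set_integrable_def)
  have i1: "integrable lborel (\<lambda>x. indicator (N p) x * g x)" if "p \<in> P" for p
    using N[OF that] by (intro int) auto
  have i2: "integrable lborel (\<lambda>x. indicator (N (fst pq) \<inter> N (snd pq)) x * g x)" if "pq \<in> PP" for pq
    using that N[of "fst pq"] N[of "snd pq"] by (intro int) (auto simp: PP_def)
  have "(\<Sum>p\<in>P. (LINT x:N p|lborel. g x)) - (\<Sum>pq\<in>PP. (LINT x:N (fst pq) \<inter> N (snd pq)|lborel. g x))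
      = (\<integral>x. (\<Sum>p\<in>P. indicator (N p) x * g x)
              - (\<Sum>pq\<in>PP. indicator (N (fst pq) \<inter> N (snd pq)) x * g x) \<partial>lborel)"
    unfolding set_lebesgue_integral_def using i1 i2
    by (simp add: Bochner_Integration.integral_sum)
  also have "\<dots> \<le> (\<integral>x. indicator ?U x * g x \<partial>lborel)"
  proof (rule integral_mono)
    show "integrable lborel (\<lambda>x. (\<Sum>p\<in>P. indicator (N p) x * g x)
        - (\<Sum>pq\<in>PP. indicator (N (fst pq) \<inter> N (snd pq)) x * g x))"
      using i1 i2 by (intro Bochner_Integration.integrable_diff Bochner_Integration.integrable_sum) auto
    show "integrable lborel (\<lambda>x. indicator ?U x * g x)" using U by (rule int)
    fix x
    have "((\<Sum>p\<in>P. indicator (N p) x) - (\<Sum>pq\<in>PP. indicator (N (fst pq) \<inter> N (snd pq)) x)) * g x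
        \<le> indicator ?U x * g x"
      using indicator_Union_Bonferroni[OF P, of N x] g_nonneg unfolding PP_def by (intro mult_right_mono) auto
    then show "(\<Sum>p\<in>P. indicator (N p) x * g x) - (\<Sum>pq\<in>PP. indicator (N (fst pq) \<inter> N (snd pq)) x * g x)
        \<le> indicator ?U x * g x"
      by (simp add: sum_distrib_right left_diff_distrib)
  qed
  also have "\<dots> = (LINT x:?U|lborel. g x)" by (simp add: set_lebesgue_integral_def)
  also have "\<dots> \<le> (LINT x:A|lborel. g x)" by (rule set_integral_mono_subset_nonneg[OF g U g_nonneg])
  finally show ?thesis unfolding PP_def .
qed

lemma set_integral_Bonferroni_card_le:
  fixes g :: "real \<Rightarrow> real" and N :: "'a \<Rightarrow> real set"
  assumes P: "finite P" and g: "set_integrable lborel A g" and g_nonneg: "\<And>x. 0 \<le> g x"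
    and N: "\<And>p. p \<in> P \<Longrightarrow> N p \<in> sets borel \<and> N p \<subseteq> A"
    and large: "\<And>p. p \<in> P \<Longrightarrow> \<alpha> \<le> (LINT x:N p|lborel. g x)"
    and overlap: "\<And>p q. p \<in> P \<Longrightarrow> q \<in> P \<Longrightarrow> p \<noteq> q \<Longrightarrow> (LINT x:N p \<inter> N q|lborel. g x) \<le> \<beta>"
    and \<beta>: "0 \<le> \<beta>"
  shows "real (card P) * \<alpha> - real (card P) ^ 2 * \<beta> \<le> (LINT x:A|lborel. g x)"
proof -
  define PP where "PP = {pq\<in>P\<times>P. fst pq \<noteq> snd pq}"
  have "real (card P) * \<alpha> \<le> (\<Sum>p\<in>P. (LINT x:N p|lborel. g x))"
    using sum_bounded_below[of P \<alpha>] large by auto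
  moreover have "(\<Sum>pq\<in>PP. (LINT x:N (fst pq) \<inter> N (snd pq)|lborel. g x)) \<le> real (card PP) * \<beta>"
    using sum_bounded_above[of PP _ \<beta>] overlap by (auto simp: PP_def)
  moreover have "card PP \<le> card P ^ 2"
    using card_mono[of "P \<times> P" PP] P by (auto simp: PP_def card_cartesian_product power2_eq_square)
  then have "real (card PP) * \<beta> \<le> real (card P) ^ 2 * \<beta>"
    using \<beta> by (intro mult_right_mono) (simp_all flip: of_nat_power)
  moreover have "(\<Sum>p\<in>P. (LINT x:N p|lborel. g x)) - (\<Sum>pq\<in>PP. (LINT x:N (fst pq) \<inter> N (snd pq)|lborel. g x))
      \<le> (LINT x:A|lborel. g x)"
    unfolding PP_def by (rule set_integral_Union_Bonferroni[OF P g g_nonneg N])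
  ultimately show ?thesis by linarith
qed

lemma islimpt_spread_points:
  fixes T :: "real set"
  assumes lim: "t0 islimpt T" and d: "d > 0"
  shows "\<exists>P. finite P \<and> card P = n \<and> P \<subseteq> T \<and> (\<forall>p\<in>P. p \<noteq> t0 \<and> \<bar>p - t0\<bar> < d)
     \<and> (\<forall>p\<in>P. \<forall>q\<in>P. p \<noteq> q \<longrightarrow> \<bar>p - t0\<bar> + \<bar>q - t0\<bar> \<le> 3 * \<bar>p - q\<bar>)"
proof (induction n)
  case 0
  show ?case by (rule exI[of _ "{}"]) auto
next
  case (Suc n)
  then obtain P where P: "finite P" "card P = n" "P \<subseteq> T" "\<forall>p\<in>P. p \<noteq> t0 \<and> \<bar>p - t0\<bar> < d"
     "\<forall>p\<in>P. \<forall>q\<in>P. p \<noteq> q \<longrightarrow> \<bar>p - t0\<bar> + \<bar>q - t0\<bar> \<le> 3 * \<bar>p - q\<bar>" by blast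
  define r where "r = Min (insert d ((\<lambda>p. \<bar>p - t0\<bar> / 2) ` P))"
  have r_pos: "r > 0" unfolding r_def using P(1,4) d by (subst Min_gr_iff) auto
  have r_le1: "r \<le> d" unfolding r_def using P(1) by auto
  have r_le2: "r \<le> \<bar>p - t0\<bar> / 2" if "p \<in> P" for p
    unfolding r_def using P(1) that by (intro Min_le) auto
  note r_le = r_le1 r_le2
  obtain s where s: "s \<in> T" "s \<noteq> t0" "dist s t0 < r"
    using lim r_pos unfolding islimpt_approachable by blast
  have sd: "\<bar>s - t0\<bar> < r" using s(3) by (simp add: dist_real_def)
  have sP: "s \<notin> P" using r_le(2) sd by force
  show ?case
  proof (rule exI[of _ "insert s P"], intro conjI)
    show "finite (insert s P)" using P by simp
    show "card (insert s P) = Suc n" using P sP by simp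
    show "insert s P \<subseteq> T" using P s by simp
    show "\<forall>p\<in>insert s P. p \<noteq> t0 \<and> \<bar>p - t0\<bar> < d" using P s sd r_le by auto
    have key: "\<bar>p - t0\<bar> + \<bar>s - t0\<bar> \<le> 3 * \<bar>p - s\<bar>" if "p \<in> P" for p
      using r_le(2)[OF that] sd by (simp add: abs_if split: if_splits)
    show "\<forall>p\<in>insert s P. \<forall>q\<in>insert s P. p \<noteq> q \<longrightarrow> \<bar>p - t0\<bar> + \<bar>q - t0\<bar> \<le> 3 * \<bar>p - q\<bar>"
      using P(5) key by (auto simp: abs_minus_commute add.commute)
  qed
qed

lemma set_integral_sq_ge_of_close:
  assumes u: "isL2 u" and w: "isL2 w" and A: "A \<in> sets borel" "A \<subseteq> {0..1}"
    and large: "a \<le> (LINT x:A|lborel. (u x)^2)"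
    and close: "(LINT x:{0..1}|lborel. (u x - w x)^2) \<le> \<eta>^2"
  shows "a / 2 - \<eta>^2 \<le> (LINT x:A|lborel. (w x)^2)"
proof -
  have d: "isL2 (\<lambda>x. u x - w x)" using u w by (rule isL2_diff)
  have "a \<le> (LINT x:A|lborel. (w x + (u x - w x))^2)" using large by simp
  also have "\<dots> \<le> 2 * (LINT x:A|lborel. (w x)^2) + 2 * (LINT x:A|lborel. (u x - w x)^2)"
    by (rule set_integral_sq_add_le[OF w d A])
  also have "(LINT x:A|lborel. (u x - w x)^2) \<le> (LINT x:{0..1}|lborel. (u x - w x)^2)"
    by (rule set_integral_sq_le_unit[OF d A])
  finally show ?thesis using close by simp
qed

lemma set_integral_sq_le_on_common_zeros:
  fixes \<rho> :: "real \<Rightarrow> real \<Rightarrow> real" and w :: "real \<Rightarrow> real"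
  assumes L2: "isL2 (\<rho> p)" "isL2 (\<rho> q)" "isL2 (\<rho> \<tau>)" "isL2 w"
    and M: "M \<in> sets borel" "M \<subseteq> {0..1}"
    and zero: "AE x in lborel. x \<in> M \<longrightarrow> \<rho> p x = 0 \<and> \<rho> q x = 0"
    and close: "\<And>s. s \<in> {p, q} \<Longrightarrow>
       (LINT x:{0..1}|lborel. (\<rho> s x - \<rho> \<tau> x - (s - \<tau>) * w x)^2) \<le> \<eta>^2 * (s - \<tau>)^2"
    and spread: "\<bar>p - \<tau>\<bar> + \<bar>q - \<tau>\<bar> \<le> 3 * \<bar>p - q\<bar>" and pq: "p \<noteq> q"
  shows "(LINT x:M|lborel. (w x)^2) \<le> 18 * \<eta>^2"
proof -
  define e where "e s x = \<rho> s x - \<rho> \<tau> x - (s - \<tau>) * w x" for s x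
  have L2e: "isL2 (e p)" "isL2 (e q)"
    using L2 unfolding e_def by (auto intro!: isL2_diff isL2_scale)
  have [measurable]: "w \<in> borel_measurable borel" "e p \<in> borel_measurable borel" "e q \<in> borel_measurable borel"
    using L2(4) L2e by (auto simp: isL2_def)
  have e_on_M: "(LINT x:M|lborel. (e s x)^2) \<le> \<eta>^2 * (s - \<tau>)^2" if s: "s \<in> {p, q}" for s
  proof -
    have "isL2 (e s)" using s L2e by auto
    from set_integral_sq_le_unit[OF this M] show ?thesis using close[OF s] by (simp add: e_def)
  qed
  \<comment> \<open>on M both \<rho> p and \<rho> q vanish, so (p - q) w = e q - e p there\<close>
  have ae: "AE x in lborel. x \<in> M \<longrightarrow> ((p - q) * w x)^2 = (e q x + (-1) * e p x)^2"
    using zero by eventually_elim (auto simp: e_def algebra_simps)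
  have "(p - q)^2 * (LINT x:M|lborel. (w x)^2) = (LINT x:M|lborel. ((p - q) * w x)^2)"
    by (simp add: set_integral_sq_scale)
  also have "\<dots> = (LINT x:M|lborel. (e q x + (-1) * e p x)^2)"
    by (rule set_lebesgue_integral_cong_AE) (use ae M in auto)
  also have "\<dots> \<le> 2 * (LINT x:M|lborel. (e q x)^2) + 2 * (LINT x:M|lborel. ((-1) * e p x)^2)"
    by (rule set_integral_sq_add_le[OF L2e(2) isL2_scale[OF L2e(1)] M])
  also have "\<dots> \<le> 2 * (\<eta>^2 * (q - \<tau>)^2) + 2 * (\<eta>^2 * (p - \<tau>)^2)"
    using e_on_M[of p] e_on_M[of q] by (simp add: set_integral_sq_scale)
  also have "\<dots> = 2 * \<eta>^2 * ((q - \<tau>)^2 + (p - \<tau>)^2)" by (simp add: algebra_simps)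
  also have "\<dots> \<le> 2 * \<eta>^2 * (9 * (p - q)^2)"
  proof (intro mult_left_mono)
    have "(q - \<tau>)^2 + (p - \<tau>)^2 \<le> (\<bar>p - \<tau>\<bar> + \<bar>q - \<tau>\<bar>)^2"
      by (simp add: power2_eq_square algebra_simps)
    also have "\<dots> \<le> (3 * \<bar>p - q\<bar>)^2" using spread by (intro power_mono) auto
    finally show "(q - \<tau>)^2 + (p - \<tau>)^2 \<le> 9 * (p - q)^2" by (simp add: power2_eq_square)
  qed simp
  finally have "(p - q)^2 * (LINT x:M|lborel. (w x)^2) \<le> (p - q)^2 * (18 * \<eta>^2)"
    by (simp add: algebra_simps)
  moreover have "(p - q)^2 > 0" using pq by simp
  ultimately show ?thesis by simp
qed

lemma not_islimpt_large_zero_set_energy: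
  fixes \<rho> v :: "real \<Rightarrow> real \<Rightarrow> real" and N :: "real \<Rightarrow> real set" and S :: "real set"
  assumes L2: "\<And>t. t \<in> S \<Longrightarrow> isL2 (\<rho> t) \<and> isL2 (v t)"
    and N: "\<And>t. t \<in> S \<Longrightarrow> N t \<in> sets borel \<and> N t \<subseteq> {0..1}"
    and zero: "\<And>t. t \<in> S \<Longrightarrow> AE x in lborel. x \<in> N t \<longrightarrow> \<rho> t x = 0"
    and deriv: "\<And>t. t \<in> S \<Longrightarrow> has_L2_derivative \<rho> (v t) t S"
    and cont: "\<And>t. t \<in> S \<Longrightarrow> ((\<lambda>s. L2norm (\<lambda>x. v s x - v t x)) \<longlongrightarrow> 0) (at t within S)"
    and a: "a > 0" and t0S: "t0 \<in> S"
  shows "\<not> t0 islimpt {t\<in>S. a \<le> (LINT x:N t|lborel. (v t x)^2)}"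
proof
  let ?T = "{t\<in>S. a \<le> (LINT x:N t|lborel. (v t x)^2)}"
  assume t0: "t0 islimpt ?T"
  define w where "w = v t0"
  have L2w: "isL2 w" using L2[OF t0S] by (simp add: w_def)
  define V where "V = (LINT x:{0..1}|lborel. (w x)^2)"
  obtain n :: nat where n: "4 * V / a < real n" using reals_Archimedean2 by blast
  \<comment> \<open>chosen so that n (a/2 - \<eta>^2) - 18 n^2 \<eta>^2 = n a / 4 > V\<close>
  define \<eta> where "\<eta> = sqrt (a / (4 * (1 + 18 * real n)))"
  have \<eta>_pos: "\<eta> > 0" unfolding \<eta>_def using a by simp
  have \<eta>2: "\<eta>^2 = a / (4 * (1 + 18 * real n))" unfolding \<eta>_def using a by simp
  have "\<forall>\<^sub>F s in at t0 within S. L2norm (\<lambda>x. v s x - w x) < \<eta>"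
    using cont[OF t0S] \<eta>_pos unfolding w_def by (rule order_tendstoD(2))
  then have "\<forall>\<^sub>F s in at t0 within S. (LINT x:{0..1}|lborel. (v s x - w x)^2) \<le> \<eta>^2"
    by eventually_elim (use sq_integral_less_of_L2norm_less in fastforce)
  with has_L2_derivative_eventually_remainder_le[OF deriv[OF t0S] \<eta>_pos]
  have "\<forall>\<^sub>F s in at t0 within S.
      (LINT x:{0..1}|lborel. (\<rho> s x - \<rho> t0 x - (s - t0) * w x)^2) \<le> \<eta>^2 * (s - t0)^2
        \<and> (LINT x:{0..1}|lborel. (v s x - w x)^2) \<le> \<eta>^2"
    unfolding w_def by (rule eventually_conj)
  then obtain d where d: "d > 0" and near: "\<And>s. s \<in> S \<Longrightarrow> s \<noteq> t0 \<Longrightarrow> dist s t0 < d \<Longrightarrow>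
      (LINT x:{0..1}|lborel. (\<rho> s x - \<rho> t0 x - (s - t0) * w x)^2) \<le> \<eta>^2 * (s - t0)^2
        \<and> (LINT x:{0..1}|lborel. (v s x - w x)^2) \<le> \<eta>^2"
    unfolding eventually_at by blast
  obtain P where P: "finite P" "card P = n" "P \<subseteq> ?T" "\<forall>p\<in>P. p \<noteq> t0 \<and> \<bar>p - t0\<bar> < d"
     "\<forall>p\<in>P. \<forall>q\<in>P. p \<noteq> q \<longrightarrow> \<bar>p - t0\<bar> + \<bar>q - t0\<bar> \<le> 3 * \<bar>p - q\<bar>"
    using islimpt_spread_points[OF t0 d, of n] by blast
  have PS: "p \<in> S" "a \<le> (LINT x:N p|lborel. (v p x)^2)" if "p \<in> P" for p using P(3) that by auto
  have near_P: "(LINT x:{0..1}|lborel. (\<rho> p x - \<rho> t0 x - (p - t0) * w x)^2) \<le> \<eta>^2 * (p - t0)^2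
        \<and> (LINT x:{0..1}|lborel. (v p x - w x)^2) \<le> \<eta>^2" if "p \<in> P" for p
    using near[OF PS(1)[OF that]] P(4) that by (auto simp: dist_real_def)
  have NP: "N p \<in> sets borel" "N p \<subseteq> {0..1}" if "p \<in> P" for p using N[OF PS(1)[OF that]] by auto
  have large: "a / 2 - \<eta>^2 \<le> (LINT x:N p|lborel. (w x)^2)" if p: "p \<in> P" for p
    using L2 PS[OF p] L2w NP[OF p] near_P[OF p]
    by (intro set_integral_sq_ge_of_close[where u="v p"]) auto
  have overlap: "(LINT x:N p \<inter> N q|lborel. (w x)^2) \<le> 18 * \<eta>^2"
    if p: "p \<in> P" and q: "q \<in> P" and pq: "p \<noteq> q" for p q
  proof (rule set_integral_sq_le_on_common_zeros[where \<rho>=\<rho> and \<tau>=t0])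
    show "isL2 (\<rho> p)" "isL2 (\<rho> q)" "isL2 (\<rho> t0)" "isL2 w"
      using L2 PS(1) p q t0S L2w by auto
    show "N p \<inter> N q \<in> sets borel" "N p \<inter> N q \<subseteq> {0..1}" using NP p q by auto
    show "AE x in lborel. x \<in> N p \<inter> N q \<longrightarrow> \<rho> p x = 0 \<and> \<rho> q x = 0"
      using zero[OF PS(1)[OF p]] zero[OF PS(1)[OF q]] by eventually_elim auto
    show "(LINT x:{0..1}|lborel. (\<rho> s x - \<rho> t0 x - (s - t0) * w x)^2) \<le> \<eta>^2 * (s - t0)^2"
      if "s \<in> {p, q}" for s using that near_P p q by auto
  qed (use P(5) p q pq in auto)
  have "real n * (a / 2 - \<eta>^2) - real n ^ 2 * (18 * \<eta>^2) \<le> V"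
    unfolding V_def P(2)[symmetric]
    by (rule set_integral_Bonferroni_card_le[OF P(1) _ _ _ large overlap])
      (use L2w NP in \<open>auto simp: isL2_def\<close>)
  then have "real n * (a / 2) - real n * \<eta>^2 * (1 + 18 * real n) \<le> V"
    by (simp add: algebra_simps power2_eq_square)
  moreover have "real n * \<eta>^2 * (1 + 18 * real n) = real n * a / 4"
    unfolding \<eta>2 by (simp add: field_simps)
  moreover have "4 * V < real n * a" using n a by (simp add: field_simps)
  ultimately show False by linarith
qed


lemma finite_large_zero_set_energy:
  fixes \<rho> v :: "real \<Rightarrow> real \<Rightarrow> real" and N :: "real \<Rightarrow> real set" and S :: "real set"
  assumes S: "closed S"
    and L2: "\<And>t. t \<in> S \<Longrightarrow> isL2 (\<rho> t) \<and> isL2 (v t)"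
    and N: "\<And>t. t \<in> S \<Longrightarrow> N t \<in> sets borel \<and> N t \<subseteq> {0..1}"
    and zero: "\<And>t. t \<in> S \<Longrightarrow> AE x in lborel. x \<in> N t \<longrightarrow> \<rho> t x = 0"
    and deriv: "\<And>t. t \<in> S \<Longrightarrow> has_L2_derivative \<rho> (v t) t S"
    and cont: "\<And>t. t \<in> S \<Longrightarrow> ((\<lambda>s. L2norm (\<lambda>x. v s x - v t x)) \<longlongrightarrow> 0) (at t within S)"
    and a: "a > 0"
  shows "finite {t\<in>S. \<bar>t\<bar> \<le> B \<and> a \<le> (LINT x:N t|lborel. (v t x)^2)}"
proof (rule ccontr)
  let ?T = "{t\<in>S. \<bar>t\<bar> \<le> B \<and> a \<le> (LINT x:N t|lborel. (v t x)^2)}"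
  assume "infinite ?T"
  moreover have "compact ({-B..B} \<inter> S)" using S by (simp add: compact_Int_closed)
  moreover have "?T \<subseteq> {-B..B} \<inter> S" by auto
  ultimately obtain t0 where t0: "t0 \<in> {-B..B} \<inter> S" "t0 islimpt ?T"
    using Heine_Borel_imp_Bolzano_Weierstrass by blast
  have "t0 islimpt {t\<in>S. a \<le> (LINT x:N t|lborel. (v t x)^2)}"
    by (rule islimpt_subset[OF t0(2)]) auto
  with not_islimpt_large_zero_set_energy[OF L2 N zero deriv cont a] t0(1) show False by blast
qed

lemma countable_nonzero_zero_set_energy:
  fixes \<rho> v :: "real \<Rightarrow> real \<Rightarrow> real" and N :: "real \<Rightarrow> real set" and S :: "real set"
  assumes S: "closed S"
    and L2: "\<And>t. t \<in> S \<Longrightarrow> isL2 (\<rho> t) \<and> isL2 (v t)"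
    and N: "\<And>t. t \<in> S \<Longrightarrow> N t \<in> sets borel \<and> N t \<subseteq> {0..1}"
    and zero: "\<And>t. t \<in> S \<Longrightarrow> AE x in lborel. x \<in> N t \<longrightarrow> \<rho> t x = 0"
    and deriv: "\<And>t. t \<in> S \<Longrightarrow> has_L2_derivative \<rho> (v t) t S"
    and cont: "\<And>t. t \<in> S \<Longrightarrow> ((\<lambda>s. L2norm (\<lambda>x. v s x - v t x)) \<longlongrightarrow> 0) (at t within S)"
  shows "countable {t\<in>S. (LINT x:N t|lborel. (v t x)^2) \<noteq> 0}"
proof -
  let ?E = "\<lambda>t. (LINT x:N t|lborel. (v t x)^2)"
  have "{t\<in>S. ?E t \<noteq> 0} \<subseteq> (\<Union>m::nat. {t\<in>S. \<bar>t\<bar> \<le> real m \<and> 1 / (real m + 1) \<le> ?E t})"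
  proof
    fix t assume t: "t \<in> {t\<in>S. ?E t \<noteq> 0}"
    then have E_pos: "?E t > 0" using set_integral_sq_nonneg[of "N t" "v t"] by auto
    obtain m1 :: nat where m1: "\<bar>t\<bar> \<le> real m1" using real_arch_simple by blast
    obtain m2 :: nat where m2: "1 / (real m2 + 1) < ?E t" using inverse_Suc_less[OF E_pos] by blast
    have "\<bar>t\<bar> \<le> real (max m1 m2)" using m1 by simp
    moreover have "1 / (real (max m1 m2) + 1) \<le> 1 / (real m2 + 1)"
      by (rule divide_left_mono) auto
    then have "1 / (real (max m1 m2) + 1) \<le> ?E t" using m2 by linarith
    ultimately show "t \<in> (\<Union>m::nat. {t\<in>S. \<bar>t\<bar> \<le> real m \<and> 1 / (real m + 1) \<le> ?E t})"
      using t by blast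
  qed
  moreover have "countable (\<Union>m::nat. {t\<in>S. \<bar>t\<bar> \<le> real m \<and> 1 / (real m + 1) \<le> ?E t})"
    by (intro countable_UN[OF _ countable_finite] finite_large_zero_set_energy[OF S L2 N zero deriv cont]) auto
  ultimately show ?thesis using countable_subset by blast
qed

section \<open>The operators G, F and f\<close>

lemma borel_measurable_Gop:
  assumes [measurable]: "\<rho> \<in> borel_measurable borel" "\<sigma> \<in> borel_measurable borel"
  shows "Gop \<mu> \<rho> \<sigma> \<in> borel_measurable borel"
proof -
  have "(\<lambda>x. LBINT y=0..ereal x. 2 * \<rho> y * \<sigma> y) \<in> borel_measurable borel"
    by (rule measurable_interval_integral_from_0) auto
  then show ?thesis unfolding Gop_def[abs_def] by measurable
qed

lemma borel_measurable_Fop: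
  assumes [measurable]: "\<rho> \<in> borel_measurable borel" "\<sigma> \<in> borel_measurable borel"
  shows "Fop \<mu> \<rho> \<sigma> \<in> borel_measurable borel"
proof -
  have [measurable]: "Gop \<mu> \<rho> \<sigma> \<in> borel_measurable borel" by (rule borel_measurable_Gop) auto
  have [measurable]: "(\<lambda>p::real\<times>real. LBINT z=ereal (snd p)..ereal (fst p). (\<rho> z)^2) \<in> borel_measurable (borel \<Otimes>\<^sub>M borel)"
    by (rule measurable_interval_integral) auto
  have [measurable]: "(cosh :: real \<Rightarrow> real) \<in> borel_measurable borel"
    by (rule borel_measurable_continuous_onI) (intro continuous_intros)
  have eqM: "sets (borel \<Otimes>\<^sub>M lborel) = sets (borel \<Otimes>\<^sub>M (borel::real measure))"
    by (rule sets_pair_measure_cong) auto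
  have "(\<lambda>x. \<integral>y. indicator {0<..<1} y * (cosh (\<bar>LBINT z=ereal y..ereal x. (\<rho> z)^2\<bar> - 1/2) / (2 * sinh (1/2))
        * ((\<rho> y)^2 * (Gop \<mu> \<rho> \<sigma> y)^2 + 2 * (\<sigma> y)^2)) \<partial>lborel) \<in> borel_measurable borel"
    by (rule lborel.borel_measurable_lebesgue_integral, subst measurable_cong_sets[OF eqM refl])
      (simp add: split_beta'; measurable)
  then show ?thesis unfolding Fop_def[abs_def] interval_integral_01_eq_indicator .
qed

lemma set_integrable_prod_isL2:
  assumes "isL2 \<rho>" "isL2 \<sigma>"
  shows "set_integrable lborel {0..1} (\<lambda>y. 2 * \<rho> y * \<sigma> y)"
proof -
  have [measurable]: "\<rho> \<in> borel_measurable borel" "\<sigma> \<in> borel_measurable borel" using assms by (auto simp: isL2_def)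
  have i: "set_integrable lborel {0..1} (\<lambda>y. (\<rho> y)^2 + (\<sigma> y)^2)" using assms by (auto simp: isL2_def)
  show ?thesis
  proof (rule set_integrable_bound[OF i])
    show "set_borel_measurable lborel {0..1} (\<lambda>y. 2 * \<rho> y * \<sigma> y)"
      unfolding set_borel_measurable_def by measurable
    have "\<bar>2 * \<rho> y * \<sigma> y\<bar> \<le> (\<rho> y)^2 + (\<sigma> y)^2" for y
    proof -
      have "0 \<le> (\<bar>\<rho> y\<bar> - \<bar>\<sigma> y\<bar>)^2" by simp
      then show ?thesis by (simp add: power2_eq_square algebra_simps abs_mult)
    qed
    then show "AE x in lborel. x \<in> {0..1} \<longrightarrow> norm (2 * \<rho> x * \<sigma> x) \<le> norm ((\<rho> x)^2 + (\<sigma> x)^2)"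
      by simp
  qed
qed

lemma Gop_bounded:
  assumes "isL2 \<rho>" "isL2 \<sigma>"
  shows "\<exists>C\<ge>0. \<forall>x\<in>{0..1}. \<bar>Gop \<mu> \<rho> \<sigma> x\<bar> \<le> C"
proof -
  let ?c = "(LBINT y=0..1. (LBINT z=0..ereal y. 2 * \<rho> z * \<sigma> z) * (\<rho> y)^2)"
  let ?C = "(LINT y:{0..1}|lborel. \<bar>2 * \<rho> y * \<sigma> y\<bar>) + \<bar>\<mu>\<bar> + \<bar>?c\<bar>"
  have "\<bar>Gop \<mu> \<rho> \<sigma> x\<bar> \<le> ?C" if x: "x \<in> {0..1}" for x
  proof -
    have "\<bar>LBINT y=0..ereal x. 2 * \<rho> y * \<sigma> y\<bar> \<le> (LINT y:{0..1}|lborel. \<bar>2 * \<rho> y * \<sigma> y\<bar>)"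
      by (rule abs_interval_integral_from_0_le[OF set_integrable_prod_isL2[OF assms]]) (use x in auto)
    then show ?thesis unfolding Gop_def by linarith
  qed
  moreover have "?C \<ge> 0"
    unfolding set_lebesgue_integral_def by (intro add_nonneg_nonneg Bochner_Integration.integral_nonneg) auto
  ultimately show ?thesis by blast
qed

lemma Fop_integrand_le:
  assumes r: "isL2 \<rho>" and x: "x \<in> {0..1}" and y: "y \<in> {0..1}"
    and G: "\<And>y. y \<in> {0..1} \<Longrightarrow> \<bar>Gop \<mu> \<rho> \<sigma> y\<bar> \<le> CG"
  shows "\<bar>cosh (\<bar>LBINT z=ereal y..ereal x. (\<rho> z)^2\<bar> - 1/2) / (2 * sinh (1/2))
           * ((\<rho> y)^2 * (Gop \<mu> \<rho> \<sigma> y)^2 + 2 * (\<sigma> y)^2)\<bar>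
         \<le> cosh ((LINT z:{0..1}|lborel. (\<rho> z)^2) + 1/2) / (2 * sinh (1/2))
           * ((\<rho> y)^2 * CG^2 + 2 * (\<sigma> y)^2)"
proof -
  let ?I = "LBINT z=ereal y..ereal x. (\<rho> z)^2"
  let ?R = "LINT z:{0..1}|lborel. (\<rho> z)^2"
  have "\<bar>?I\<bar> \<le> ?R"
    by (rule abs_interval_integral_le_nonneg[OF _ _ x y]) (use r in \<open>auto simp: isL2_def\<close>)
  then have "cosh \<bar>\<bar>?I\<bar> - 1/2\<bar> \<le> cosh (?R + 1/2)"
    by (subst cosh_real_nonneg_le_iff) auto
  then have kernel: "cosh (\<bar>?I\<bar> - 1/2) / (2 * sinh (1/2)) \<le> cosh (?R + 1/2) / (2 * sinh (1/2))"
    by (simp add: divide_right_mono)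
  have "(Gop \<mu> \<rho> \<sigma> y)^2 \<le> CG^2"
    using G[OF y] by (metis abs_ge_zero power2_abs power_mono)
  then have "(\<rho> y)^2 * (Gop \<mu> \<rho> \<sigma> y)^2 + 2 * (\<sigma> y)^2 \<le> (\<rho> y)^2 * CG^2 + 2 * (\<sigma> y)^2"
    by (simp add: mult_left_mono)
  with kernel have "cosh (\<bar>?I\<bar> - 1/2) / (2 * sinh (1/2)) * ((\<rho> y)^2 * (Gop \<mu> \<rho> \<sigma> y)^2 + 2 * (\<sigma> y)^2)
      \<le> cosh (?R + 1/2) / (2 * sinh (1/2)) * ((\<rho> y)^2 * CG^2 + 2 * (\<sigma> y)^2)"
    by (rule mult_mono) simp_all
  then show ?thesis by (subst abs_of_nonneg) simp_all
qed

lemma Fop_bounded: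
  assumes r: "isL2 \<rho>" and s: "isL2 \<sigma>"
  shows "\<exists>C\<ge>0. \<forall>x\<in>{0..1}. \<bar>Fop \<mu> \<rho> \<sigma> x\<bar> \<le> C"
proof -
  obtain CG where CG: "CG \<ge> 0" "\<And>x. x \<in> {0..1} \<Longrightarrow> \<bar>Gop \<mu> \<rho> \<sigma> x\<bar> \<le> CG" using Gop_bounded[OF r s] by blast
  define KB where "KB = cosh ((LINT z:{0..1}|lborel. (\<rho> z)^2) + 1/2) / (2 * sinh (1/2))"
  have KB0: "KB \<ge> 0" unfolding KB_def by simp
  define b where "b y = indicator {0<..<1} y * (KB * ((\<rho> y)^2 * CG^2 + 2 * (\<sigma> y)^2))" for y
  have bint: "integrable lborel b"
  proof -
    have "set_integrable lborel {0..1} (\<lambda>y. KB * ((\<rho> y)^2 * CG^2 + 2 * (\<sigma> y)^2))"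
      using r s by (auto simp: isL2_def)
    then have "set_integrable lborel {0<..<1} (\<lambda>y. KB * ((\<rho> y)^2 * CG^2 + 2 * (\<sigma> y)^2))"
      by (rule set_integrable_subset) auto
    then show ?thesis by (simp add: b_def[abs_def] set_integrable_def)
  qed
  have "\<bar>Fop \<mu> \<rho> \<sigma> x\<bar> \<le> integral\<^sup>L lborel b" if x: "x \<in> {0..1}" for x
  proof -
    let ?k = "\<lambda>y. cosh (\<bar>LBINT z=ereal y..ereal x. (\<rho> z)^2\<bar> - 1/2) / (2 * sinh (1/2))
        * ((\<rho> y)^2 * (Gop \<mu> \<rho> \<sigma> y)^2 + 2 * (\<sigma> y)^2)"
    have "\<bar>Fop \<mu> \<rho> \<sigma> x\<bar> = \<bar>\<integral>y. indicator {0<..<1} y * ?k y \<partial>lborel\<bar>"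
      unfolding Fop_def interval_integral_01_eq_indicator ..
    also have "\<dots> \<le> (\<integral>y. \<bar>indicator {0<..<1} y * ?k y\<bar> \<partial>lborel)" by (rule integral_abs_bound)
    also have "\<dots> \<le> integral\<^sup>L lborel b"
    proof (rule integral_mono'[OF bint])
      fix y :: real
      show "0 \<le> b y" using KB0 by (simp add: b_def)
      show "\<bar>indicator {0<..<1} y * ?k y\<bar> \<le> b y"
      proof (cases "y \<in> {0<..<1}")
        case False then show ?thesis by (simp add: b_def)
      next
        case True
        then have "y \<in> {0..1}" by auto
        with Fop_integrand_le[OF r x this CG(2)] show ?thesis using True by (simp add: b_def KB_def)
      qed
    qed
    finally show ?thesis .
  qed
  moreover have "integral\<^sup>L lborel b \<ge> 0"
    by (rule Bochner_Integration.integral_nonneg) (use KB0 in \<open>simp add: b_def\<close>)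
  ultimately show ?thesis by blast
qed

lemma isL2_fop:
  assumes r: "isL2 \<rho>" and s: "isL2 \<sigma>"
  shows "isL2 (fop \<mu> \<rho> \<sigma>)"
proof -
  have [measurable]: "\<rho> \<in> borel_measurable borel" "\<sigma> \<in> borel_measurable borel" using assms by (auto simp: isL2_def)
  have [measurable]: "Gop \<mu> \<rho> \<sigma> \<in> borel_measurable borel" "Fop \<mu> \<rho> \<sigma> \<in> borel_measurable borel"
    by (auto intro: borel_measurable_Gop borel_measurable_Fop)
  obtain CG where CG: "CG \<ge> 0" "\<And>x. x \<in> {0..1} \<Longrightarrow> \<bar>Gop \<mu> \<rho> \<sigma> x\<bar> \<le> CG" using Gop_bounded[OF r s] by blast
  obtain CF where CF: "CF \<ge> 0" "\<And>x. x \<in> {0..1} \<Longrightarrow> \<bar>Fop \<mu> \<rho> \<sigma> x\<bar> \<le> CF" using Fop_bounded[OF r s] by blast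
  have m: "fop \<mu> \<rho> \<sigma> \<in> borel_measurable borel" unfolding fop_def[abs_def] by measurable
  have i: "set_integrable lborel {0..1} (\<lambda>x. ((CG^2 + CF)^2 / 4) * (\<rho> x)^2)"
    using r by (auto simp: isL2_def)
  have "set_integrable lborel {0..1} (\<lambda>x. (fop \<mu> \<rho> \<sigma> x)^2)"
  proof (rule set_integrable_bound[OF i])
    show "set_borel_measurable lborel {0..1} (\<lambda>x. (fop \<mu> \<rho> \<sigma> x)^2)"
      unfolding set_borel_measurable_def using m by measurable
    have "(fop \<mu> \<rho> \<sigma> x)^2 \<le> ((CG^2 + CF)^2 / 4) * (\<rho> x)^2" if x: "x \<in> {0..1}" for x
    proof -
      have g2: "(Gop \<mu> \<rho> \<sigma> x)^2 \<le> CG^2" using CG(2)[OF x] by (metis abs_ge_zero power2_abs power_mono)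
      have g0: "0 \<le> (Gop \<mu> \<rho> \<sigma> x)^2" by simp
      have "\<bar>(Gop \<mu> \<rho> \<sigma> x)^2 - Fop \<mu> \<rho> \<sigma> x\<bar> \<le> CG^2 + CF"
        using g2 g0 CF(2)[OF x] unfolding abs_le_iff by linarith
      then have "((Gop \<mu> \<rho> \<sigma> x)^2 - Fop \<mu> \<rho> \<sigma> x)^2 \<le> (CG^2 + CF)^2"
        by (metis abs_ge_zero power2_abs power_mono)
      then have "(\<rho> x)^2 * ((Gop \<mu> \<rho> \<sigma> x)^2 - Fop \<mu> \<rho> \<sigma> x)^2 \<le> (\<rho> x)^2 * (CG^2 + CF)^2"
        by (intro mult_left_mono) auto
      moreover have "(fop \<mu> \<rho> \<sigma> x)^2 = (\<rho> x)^2 * ((Gop \<mu> \<rho> \<sigma> x)^2 - Fop \<mu> \<rho> \<sigma> x)^2 / 4"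
        unfolding fop_def by (simp add: power_mult_distrib power_divide)
      ultimately show ?thesis by (simp add: algebra_simps)
    qed
    then show "AE x in lborel. x \<in> {0..1} \<longrightarrow> norm ((fop \<mu> \<rho> \<sigma> x)^2) \<le> norm (((CG^2 + CF)^2 / 4) * (\<rho> x)^2)"
      by auto
  qed
  then show ?thesis using m by (simp add: isL2_def)
qed

section \<open>The set N(t)\<close>

lemma Nset_eq_deriv_zero:
  "Nset \<mu> u0 \<rho> v t = {x \<in> {0..<1}. ((\<lambda>y. LBINT z=0..ereal y. (\<rho> t z)^2) has_real_derivative 0) (at x)}"
proof -
  have "(\<lambda>y. Kfun \<mu> u0 \<rho> v t y) = (\<lambda>y. (LBINT z=0..ereal y. (\<rho> t z)^2)
      + (t * u0 0 - (LBINT \<tau>=0..ereal t. (LBINT s=0..ereal \<tau>. Hop \<mu> (\<rho> s) (v s) 0))))"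
    by (simp add: Kfun_def fun_eq_iff)
  then show ?thesis unfolding Nset_def by (simp only: has_real_derivative_add_const_iff)
qed

lemma sets_borel_Nset:
  assumes "isL2 (\<rho> t)"
  shows "Nset \<mu> u0 \<rho> v t \<in> sets borel"
proof -
  define \<Phi> where "\<Phi> y = (LBINT z=0..ereal y. (\<rho> t z)^2)" for y
  have int: "set_integrable lborel {0..1} (\<lambda>z. (\<rho> t z)^2)" and [measurable]: "\<rho> t \<in> borel_measurable borel"
    using assms by (auto simp: isL2_def)
  have [measurable]: "\<Phi> \<in> borel_measurable borel"
    unfolding \<Phi>_def by (rule measurable_interval_integral_from_0) auto
  have "continuous_on {0<..<1} \<Phi>"
    unfolding \<Phi>_def by (rule continuous_on_subset[OF continuous_on_interval_integral_from_0[OF int]]) auto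
  then have "{x \<in> {0<..<1}. (\<Phi> has_real_derivative 0) (at x)} \<in> sets borel"
    by (rule sets_borel_has_real_derivative_zero) auto
  moreover have "Nset \<mu> u0 \<rho> v t \<inter> {0} \<in> sets borel"
    by (rule borel_closed, rule finite_imp_closed) auto
  moreover have "Nset \<mu> u0 \<rho> v t
      = (Nset \<mu> u0 \<rho> v t \<inter> {0}) \<union> {x \<in> {0<..<1}. (\<Phi> has_real_derivative 0) (at x)}"
    unfolding Nset_eq_deriv_zero \<Phi>_def by auto
  ultimately show ?thesis by (metis sets.Un)
qed

lemma AE_Nset_imp_zero:
  assumes "isL2 (\<rho> t)"
  shows "AE x in lborel. x \<in> Nset \<mu> u0 \<rho> v t \<longrightarrow> \<rho> t x = 0"
proof -
  have "set_integrable lborel {0..1} (\<lambda>z. (\<rho> t z)^2)" using assms by (simp add: isL2_def)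
  from indefinite_integral_deriv_zero_ae[OF this] AE_lborel_singleton[of 0]
  show ?thesis by eventually_elim (auto simp: Nset_eq_deriv_zero)
qed

theorem lemma8:
  fixes u0 du0 :: "real \<Rightarrow> real"
    and \<rho> v :: "real \<Rightarrow> real \<Rightarrow> real"
  assumes u0_per: "periodic1 u0"
    and du0_per: "periodic1 du0"
    and du0_L2: "isL2 du0"
    and u0_H1: "\<And>x. u0 x = u0 0 + (LBINT y=0..ereal x. du0 y)"
    and per: "\<And>t. t \<ge> 0 \<Longrightarrow> periodic1 (\<rho> t) \<and> periodic1 (v t)"
    and L2: "\<And>t. t \<ge> 0 \<Longrightarrow> isL2 (\<rho> t) \<and> isL2 (v t)"
    and ode1: "\<And>t. t \<ge> 0 \<Longrightarrow> has_L2_derivative \<rho> (v t) t {0..}"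
    and ode2: "\<And>t. t \<ge> 0 \<Longrightarrow>
        has_L2_derivative v (fop (LBINT x=0..1. u0 x) (\<rho> t) (v t)) t {0..}"
    and init1: "AE x in lborel. x \<in> {0..1} \<longrightarrow> \<rho> 0 x = 1"
    and init2: "AE x in lborel. x \<in> {0..1} \<longrightarrow> v 0 x = du0 x / 2"
    and norm1: "\<And>t. t \<ge> 0 \<Longrightarrow> (LBINT x=0..1. (\<rho> t x)^2) = 1"
  shows "AE t in lborel. t \<ge> 0 \<longrightarrow>
           (Nset (LBINT x=0..1. u0 x) u0 \<rho> v t \<in> sets lebesgue \<and>
            (LINT y:Nset (LBINT x=0..1. u0 x) u0 \<rho> v t|lebesgue. (v t y)^2) = 0)"
proof -
  \<comment> \<open>only the L2 regularity and the two evolution equations are needed\<close>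
  define N where "N t = Nset (LBINT x=0..1. u0 x) u0 \<rho> v t" for t
  have L2': "isL2 (\<rho> t) \<and> isL2 (v t)" if "t \<in> {0..}" for t using L2 that by auto
  have N: "N t \<in> sets borel \<and> N t \<subseteq> {0..1}" if "t \<in> {0..}" for t
    using sets_borel_Nset L2' that by (auto simp: N_def Nset_def)
  have zero: "AE x in lborel. x \<in> N t \<longrightarrow> \<rho> t x = 0" if "t \<in> {0..}" for t
    unfolding N_def using L2' that by (auto intro: AE_Nset_imp_zero)
  have cont: "((\<lambda>s. L2norm (\<lambda>x. v s x - v t x)) \<longlongrightarrow> 0) (at t within {0..})" if "t \<in> {0..}" for t
    using L2' that by (intro has_L2_derivative_imp_L2_continuous[OF ode2] isL2_fop) auto
  have "countable {t \<in> {0..}. (LINT x:N t|lborel. (v t x)^2) \<noteq> 0}"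
    by (rule countable_nonzero_zero_set_energy[OF _ L2' N zero _ cont]) (use ode1 in auto)
  then have "AE t in lborel. t \<notin> {t \<in> {0..}. (LINT x:N t|lborel. (v t x)^2) \<noteq> 0}"
    by (rule AE_not_in[OF countable_imp_null_set_lborel])
  then show ?thesis
    by eventually_elim (use N L2' in \<open>auto simp: N_def isL2_def set_integral_sq_completion\<close>)
qed

end
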